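(* Let $\alpha\in(1,\infty]$, let $Q$ be a probability measure on $\mathcal Z$, and let $P_{Z|X}$ be a Markov kernel from $\mathcal X$ to $\mathcal Z$ with $P_{Z|X}(\cdot|x)\ll Q$ for every $x\in\mathcal X$. For every $x\in\mathcal X$, if $K$ is produced by PPR with parameter $\alpha$, proposal $Q$ and target $P=P_{Z|X}(\cdot|x)$, then the output $Z_K$ has distribution exactly $P_{Z|X}(\cdot|x)$.
   Context: Poisson private representation (PPR). Let $Q$ be a probability measure on a measurable space $\mathcal Z$ and $P$ a probability measure with $P\ll Q$. Let $Z_1,Z_2,\ldots$ be i.i.d. with law $Q$, and independently let $T_1\le T_2\le\cdots$ be the points of a homogeneous Poisson process of rate $1$ on $[0,\infty)$ (i.e. $T_1,T_2-T_1,T_3-T_2,\ldots$ are i.i.d. $\mathrm{Exp}(1)$). Put $\tilde T_i:=T_i\cdot\big(\frac{\mathrm dP}{\mathrm dQ}(Z_i)\big)^{-1}$, with $\tilde T_i:=\infty$ when $\frac{\mathrm dP}{\mathrm dQ}(Z_i)=0$ (and $\infty^{-\alpha}:=0$). For $\alpha\in(1,\infty)$, PPR with parameter $\alpha$ draws a random index $K\in\{1,2,\ldots\}$ with $\Pr(K=k\mid (Z_i,T_i)_{i})=\tilde T_k^{-\alpha}/\sum_{i=1}^\infty\tilde T_i^{-\alpha}$; for $\alpha=\infty$, $K:=\arg\min_i\tilde T_i$. The output is $Z_K$. *)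

theory Defs
  imports "HOL-Probability.Probability"
begin

text \<open>Underlying randomness of PPR: an i.i.d. sequence (Z_i) with law Q, and independently
  an i.i.d. sequence (E_i) of Exp(1) inter-arrival times (indices start at 0).\<close>
definition ppr_space :: "'z measure \<Rightarrow> ((nat \<Rightarrow> 'z) \<times> (nat \<Rightarrow> real)) measure" where
  "ppr_space Q = (PiM UNIV (\<lambda>i::nat. Q)) \<Otimes>\<^sub>M (PiM UNIV (\<lambda>i::nat. density lborel (exponential_density 1)))"

definition ppr_T :: "(nat \<Rightarrow> real) \<Rightarrow> nat \<Rightarrow> real" where
  "ppr_T e i = (\<Sum>j\<le>i. e j)"

definition ppr_dens :: "'z measure \<Rightarrow> 'z measure \<Rightarrow> 'z \<Rightarrow> real" where
  "ppr_dens Q P z = enn2real (RN_deriv Q P z)"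

definition ppr_Ttilde :: "'z measure \<Rightarrow> 'z measure \<Rightarrow> (nat \<Rightarrow> 'z) \<times> (nat \<Rightarrow> real) \<Rightarrow> nat \<Rightarrow> ereal" where
  "ppr_Ttilde Q P \<omega> i =
     (if ppr_dens Q P (fst \<omega> i) = 0 then \<infinity>
      else ereal (ppr_T (snd \<omega>) i / ppr_dens Q P (fst \<omega> i)))"

definition ppr_weight :: "real \<Rightarrow> 'z measure \<Rightarrow> 'z measure \<Rightarrow> (nat \<Rightarrow> 'z) \<times> (nat \<Rightarrow> real) \<Rightarrow> nat \<Rightarrow> ennreal" where
  "ppr_weight a Q P \<omega> i =
     (case ppr_Ttilde Q P \<omega> i of ereal t \<Rightarrow> ennreal (t powr (- a)) | _ \<Rightarrow> 0)"

text \<open>Conditional probability Pr(K = k | (Z_i,T_i)_i) of PPR with parameter alpha.\<close>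
definition ppr_index_prob :: "ereal \<Rightarrow> 'z measure \<Rightarrow> 'z measure \<Rightarrow> (nat \<Rightarrow> 'z) \<times> (nat \<Rightarrow> real) \<Rightarrow> nat \<Rightarrow> ennreal" where
  "ppr_index_prob \<alpha> Q P \<omega> k =
     (if \<alpha> = \<infinity> then
        (if \<forall>j. j \<noteq> k \<longrightarrow> ppr_Ttilde Q P \<omega> k < ppr_Ttilde Q P \<omega> j then 1 else 0)
      else ppr_weight (real_of_ereal \<alpha>) Q P \<omega> k / (\<Sum>i. ppr_weight (real_of_ereal \<alpha>) Q P \<omega> i))"

text \<open>Pr(Z_K \<in> A) = E[ sum_k Pr(K = k | (Z_i,T_i)_i) * 1{Z_k \<in> A} ].\<close>
definition ppr_output_prob :: "ereal \<Rightarrow> 'z measure \<Rightarrow> 'z measure \<Rightarrow> 'z set \<Rightarrow> ennreal" where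
  "ppr_output_prob \<alpha> Q P A =
     (\<integral>\<^sup>+ \<omega>. (\<Sum>k. ppr_index_prob \<alpha> Q P \<omega> k * indicator A (fst \<omega> k)) \<partial>ppr_space Q)"

end

theory Submission
  imports Defs
begin

text \<open>The arrival times T_k of a rate-1 Poisson process on (0, \<infinity>), marked with i.i.d. Z_k of law Q,
  are mapped to T_k / (dP/dQ)(Z_k); the resulting marked points form a Poisson process of intensity
  P \<otimes> Lebesgue on (0, \<infinity>). Its Mecke equation turns Pr(Z_K \<in> A), for any selection rule that
  only looks at the scaled times, into P(A) times a constant C independent of A. Taking A = space Q
  and using that PPR's selection probabilities sum to 1 almost surely gives C = 1.
  The Mecke equation of the unmarked process is proved directly from the i.i.d. exponential gaps,
  by induction on the index of the point that is removed.\<close>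

subsection \<open>Sequence spaces\<close>

lemma prob_space_PiM_nat: "prob_space M \<Longrightarrow> prob_space (PiM UNIV (\<lambda>i::nat. M))"
  by (intro prob_space_PiM) auto

lemma sequence_space_if_prob_space: "prob_space M \<Longrightarrow> sequence_space M"
  by (simp add: sequence_space_def product_prob_space_def product_sigma_finite_def
      product_prob_space_axioms_def prob_space_imp_sigma_finite)

lemma sigma_finite_PiM_nat: "prob_space M \<Longrightarrow> sigma_finite_measure (PiM UNIV (\<lambda>i::nat. M))"
  by (intro prob_space_imp_sigma_finite prob_space_PiM_nat)

lemma nn_integral_swap:
  assumes "sigma_finite_measure M1" "sigma_finite_measure M2"
    and "(\<lambda>(x, y). f x y) \<in> borel_measurable (M1 \<Otimes>\<^sub>M M2)"
  shows "(\<integral>\<^sup>+x. \<integral>\<^sup>+y. f x y \<partial>M2 \<partial>M1) = (\<integral>\<^sup>+y. \<integral>\<^sup>+x. f x y \<partial>M1 \<partial>M2)"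
proof -
  interpret pair_sigma_finite M1 M2 using assms(1,2) by (simp add: pair_sigma_finite_def)
  show ?thesis using Fubini[OF assms(3)] by simp
qed

lemma nn_integral_pair_measure_snd:
  assumes "sigma_finite_measure M1" "sigma_finite_measure M2" "f \<in> borel_measurable (M1 \<Otimes>\<^sub>M M2)"
  shows "(\<integral>\<^sup>+w. f w \<partial>(M1 \<Otimes>\<^sub>M M2)) = (\<integral>\<^sup>+y. \<integral>\<^sup>+x. f (x, y) \<partial>M1 \<partial>M2)"
proof -
  interpret pair_sigma_finite M1 M2 using assms(1,2) by (simp add: pair_sigma_finite_def)
  show ?thesis using nn_integral_snd[OF assms(3)] by simp
qed

lemma measurable_case_nat_PiM:
  "(\<lambda>w. case_nat (fst w) (snd w)) \<in> measurable (M \<Otimes>\<^sub>M PiM UNIV (\<lambda>_::nat. M)) (PiM UNIV (\<lambda>_. M))"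
proof (rule measurable_PiM_single')
  fix i show "(\<lambda>w. case_nat (fst w) (snd w) i) \<in> measurable (M \<Otimes>\<^sub>M PiM UNIV (\<lambda>_::nat. M)) M"
    by (cases i) auto
qed (auto simp: space_pair_measure space_PiM PiE_iff split: nat.split)

lemma measurable_case_nat_PiM'[measurable (raw)]:
  "f \<in> measurable N M \<Longrightarrow> g \<in> measurable N (PiM UNIV (\<lambda>_::nat. M)) \<Longrightarrow>
    (\<lambda>x. case_nat (f x) (g x)) \<in> measurable N (PiM UNIV (\<lambda>_. M))"
  using measurable_compose[OF measurable_Pair measurable_case_nat_PiM, of f N M g] by simp

lemma nn_integral_PiM_nat_case_nat:
  assumes M: "prob_space M" and f[measurable]: "f \<in> borel_measurable (PiM UNIV (\<lambda>i::nat. M))"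
  shows "(\<integral>\<^sup>+\<omega>. f \<omega> \<partial>PiM UNIV (\<lambda>i::nat. M))
    = (\<integral>\<^sup>+x. \<integral>\<^sup>+\<omega>. f (case_nat x \<omega>) \<partial>PiM UNIV (\<lambda>i::nat. M) \<partial>M)"
proof -
  interpret sequence_space M using sequence_space_if_prob_space[OF M] .
  have "(\<integral>\<^sup>+\<omega>. f \<omega> \<partial>S) = (\<integral>\<^sup>+\<omega>. f \<omega> \<partial>distr (M \<Otimes>\<^sub>M S) S (\<lambda>(s, \<omega>). case_nat s \<omega>))"
    by (simp add: PiM_iter)
  also have "\<dots> = (\<integral>\<^sup>+z. f (case_nat (fst z) (snd z)) \<partial>(M \<Otimes>\<^sub>M S))"
    by (subst nn_integral_distr) (auto simp: split_beta')
  also have "\<dots> = (\<integral>\<^sup>+x. \<integral>\<^sup>+\<omega>. f (case_nat x \<omega>) \<partial>S \<partial>M)"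
    by (subst sigma_finite_measure.nn_integral_fst[OF sigma_finite_PiM_nat[OF M], symmetric]) auto
  finally show ?thesis .
qed

definition del_index :: "nat \<Rightarrow> (nat \<Rightarrow> 'a) \<Rightarrow> nat \<Rightarrow> 'a" where
  "del_index k f i = f (if i < k then i else Suc i)"

lemma del_index_0_case_nat[simp]: "del_index 0 (case_nat a f) = f"
  by (auto simp: del_index_def fun_eq_iff)

lemma del_index_Suc_case_nat[simp]: "del_index (Suc k) (case_nat a f) = case_nat a (del_index k f)"
  by (auto simp: del_index_def fun_eq_iff split: nat.split)

lemma measurable_del_index[measurable]:
  "del_index k \<in> measurable (PiM UNIV (\<lambda>i::nat. M)) (PiM UNIV (\<lambda>i::nat. M))"
  unfolding del_index_def by (rule measurable_PiM_single') (auto simp: space_PiM)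

lemma sum_lessThan_Suc_del_index:
  fixes w :: "nat \<Rightarrow> 'a::comm_monoid_add"
  assumes "k \<le> n"
  shows "(\<Sum>i<Suc n. w i) = w k + (\<Sum>i<n. del_index k w i)"
proof -
  let ?g = "\<lambda>i::nat. if i < k then i else Suc i"
  have inj: "inj_on ?g {..<n}" by (auto simp: inj_on_def split: if_splits)
  have split: "{..<Suc n} = insert k (?g ` {..<n})"
  proof (intro equalityI subsetI)
    fix i assume i: "i \<in> {..<Suc n}"
    consider "i < k" | "i = k" | "k < i" by linarith
    then show "i \<in> insert k (?g ` {..<n})"
    proof cases
      case 1
      then show ?thesis using assms by (intro insertI2 rev_image_eqI[of i]) auto
    next
      case 3
      then show ?thesis using i by (intro insertI2 rev_image_eqI[of "i - 1"]) auto
    qed simp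
  qed (use assms in auto)
  have "k \<notin> ?g ` {..<n}" by auto
  then have "(\<Sum>i<Suc n. w i) = w k + sum w (?g ` {..<n})"
    unfolding split by (intro sum.insert) auto
  also have "sum w (?g ` {..<n}) = (\<Sum>i<n. del_index k w i)"
    unfolding sum.reindex[OF inj] by (simp add: del_index_def)
  finally show ?thesis .
qed

lemma suminf_del_index:
  fixes w :: "nat \<Rightarrow> ennreal"
  shows "(\<Sum>i. w i) = w k + (\<Sum>i. del_index k w i)"
proof -
  have "(\<lambda>n. w k + (\<Sum>i<n. del_index k w i)) \<longlonglongrightarrow> w k + (\<Sum>i. del_index k w i)"
    by (intro tendsto_add tendsto_const summable_LIMSEQ) simp
  moreover have "\<forall>\<^sub>F n in sequentially. w k + (\<Sum>i<n. del_index k w i) = (\<Sum>i<Suc n. w i)"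
    unfolding eventually_sequentially by (intro exI[of _ k] allI impI sum_lessThan_Suc_del_index[symmetric])
  ultimately have "(\<lambda>n. \<Sum>i<Suc n. w i) \<longlonglongrightarrow> w k + (\<Sum>i. del_index k w i)"
    by (rule Lim_transform_eventually)
  moreover have "(\<lambda>n. \<Sum>i<Suc n. w i) \<longlonglongrightarrow> (\<Sum>i. w i)"
    by (rule LIMSEQ_Suc, rule summable_LIMSEQ) simp
  ultimately show ?thesis using LIMSEQ_unique by auto
qed

lemma all_del_index_iff: "(\<forall>j. j \<noteq> k \<longrightarrow> P (X j)) \<longleftrightarrow> (\<forall>i. P (del_index k X i))"
proof
  assume "\<forall>i. P (del_index k X i)"
  moreover have "j = del_index k id (if j < k then j else j - 1)" if "j \<noteq> k" for j
    using that by (auto simp: del_index_def)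
  ultimately show "\<forall>j. j \<noteq> k \<longrightarrow> P (X j)" by (metis del_index_def id_apply)
qed (auto simp: del_index_def)

lemma nn_integral_PiM_del_index:
  assumes M: "prob_space M" and F: "F \<in> borel_measurable (M \<Otimes>\<^sub>M PiM UNIV (\<lambda>_::nat. M))"
  shows "(\<integral>\<^sup>+zs. F (zs k, del_index k zs) \<partial>PiM UNIV (\<lambda>_. M))
       = (\<integral>\<^sup>+z. \<integral>\<^sup>+zs. F (z, zs) \<partial>PiM UNIV (\<lambda>_. M) \<partial>M)"
  using F
proof (induction k arbitrary: F)
  case 0
  note [measurable] = "0.prems"
  show ?case by (subst nn_integral_PiM_nat_case_nat[OF M]) auto
next
  case (Suc k)
  note [measurable] = Suc.prems
  have sigma_finite_M: "sigma_finite_measure M"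
    by (rule prob_space_imp_sigma_finite[OF M])
  note [measurable (raw)] =
    sigma_finite_measure.borel_measurable_nn_integral[OF sigma_finite_PiM_nat[OF M]]
    sigma_finite_measure.borel_measurable_nn_integral[OF sigma_finite_M]
  have "(\<integral>\<^sup>+zs. F (zs (Suc k), del_index (Suc k) zs) \<partial>PiM UNIV (\<lambda>_. M))
      = (\<integral>\<^sup>+x. \<integral>\<^sup>+zs. F (zs k, case_nat x (del_index k zs)) \<partial>PiM UNIV (\<lambda>_. M) \<partial>M)"
    by (subst nn_integral_PiM_nat_case_nat[OF M]) auto
  also have "\<dots> = (\<integral>\<^sup>+x. \<integral>\<^sup>+z. \<integral>\<^sup>+zs. F (z, case_nat x zs) \<partial>PiM UNIV (\<lambda>_. M) \<partial>M \<partial>M)"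
  proof (intro nn_integral_cong)
    fix x assume "x \<in> space M"
    then have "(\<lambda>w. F (fst w, case_nat x (snd w))) \<in> borel_measurable (M \<Otimes>\<^sub>M PiM UNIV (\<lambda>_::nat. M))"
      by measurable
    from Suc.IH[OF this]
    show "(\<integral>\<^sup>+zs. F (zs k, case_nat x (del_index k zs)) \<partial>PiM UNIV (\<lambda>_. M))
        = (\<integral>\<^sup>+z. \<integral>\<^sup>+zs. F (z, case_nat x zs) \<partial>PiM UNIV (\<lambda>_. M) \<partial>M)"
      by simp
  qed
  also have "\<dots> = (\<integral>\<^sup>+z. \<integral>\<^sup>+x. \<integral>\<^sup>+zs. F (z, case_nat x zs) \<partial>PiM UNIV (\<lambda>_. M) \<partial>M \<partial>M)"
    by (rule nn_integral_swap[OF sigma_finite_M sigma_finite_M]) measurable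
  also have "\<dots> = (\<integral>\<^sup>+z. \<integral>\<^sup>+zs. F (z, zs) \<partial>PiM UNIV (\<lambda>_. M) \<partial>M)"
    by (intro nn_integral_cong, subst nn_integral_PiM_nat_case_nat[OF M]) auto
  finally show ?case .
qed

lemma suminf_if_first_index:
  "(\<Sum>k. if (\<forall>j<k. \<not> P j) \<and> P k then x else 0 :: ennreal) = (if \<exists>k. P k then x else 0)"
proof (cases "\<exists>k. P k")
  case True
  define k0 where "k0 = (LEAST k. P k)"
  have "((\<forall>j<k. \<not> P j) \<and> P k) \<longleftrightarrow> k = k0" for k
  proof
    assume "(\<forall>j<k. \<not> P j) \<and> P k"
    then show "k = k0" unfolding k0_def by (intro Least_equality[symmetric]) (auto simp: not_less[symmetric])
  next
    assume "k = k0"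
    then show "(\<forall>j<k. \<not> P j) \<and> P k" unfolding k0_def using True by (auto intro: LeastI_ex dest: not_less_Least)
  qed
  then have "(\<Sum>k. if (\<forall>j<k. \<not> P j) \<and> P k then x else 0) = (\<Sum>k. if k = k0 then x else 0)"
    by (intro suminf_cong) simp
  also have "\<dots> = x"
    by (subst suminf_finite[of "{k0}"]) auto
  finally show ?thesis using True by simp
qed auto

lemma AE_PiM_nat_exists_notin:
  assumes M: "prob_space M" and B: "B \<in> sets M" and less_1: "measure M B < 1"
  shows "AE \<omega> in PiM UNIV (\<lambda>i::nat. M). \<exists>i. \<omega> i \<notin> B"
proof -
  interpret S: sequence_space M using sequence_space_if_prob_space[OF M] .
  have "(\<lambda>n. measure M B ^ Suc n) \<longlonglongrightarrow> 0"
    by (rule LIMSEQ_Suc, rule LIMSEQ_realpow_zero) (use less_1 in auto)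
  moreover have "(\<lambda>n. measure M B ^ Suc n) \<longlonglongrightarrow> measure S.S (Pi UNIV (\<lambda>_. B))"
    using S.measure_PiM_countable[of "\<lambda>_. B"] B by simp
  ultimately have "measure S.S (Pi UNIV (\<lambda>_. B)) = 0"
    using LIMSEQ_unique by blast
  moreover have PiB: "Pi UNIV (\<lambda>_. B) \<in> sets S.S"
    using B by (rule S.infprod_in_sets)
  ultimately have "Pi UNIV (\<lambda>_. B) \<in> null_sets S.S"
    by (simp add: S.emeasure_eq_measure null_sets_def)
  then show ?thesis
    by (rule AE_I') auto
qed

subsection \<open>The Poisson process of rate 1\<close>

abbreviation exp1 :: "real measure" where
  "exp1 \<equiv> density lborel (exponential_density 1)"

abbreviation exp1_seq :: "(nat \<Rightarrow> real) measure" where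
  "exp1_seq \<equiv> PiM UNIV (\<lambda>i::nat. exp1)"

abbreviation real_seqs :: "(nat \<Rightarrow> real) measure" where
  "real_seqs \<equiv> PiM UNIV (\<lambda>i::nat. borel)"

lemma prob_space_exp1: "prob_space exp1"
  by (rule prob_space_exponential_density) simp

lemma sets_exp1[measurable_cong]: "sets exp1 = sets borel"
  by simp

lemma sigma_finite_exp1_seq: "sigma_finite_measure exp1_seq"
  by (rule sigma_finite_PiM_nat[OF prob_space_exp1])

lemmas borel_measurable_nn_integral_exp1_seq[measurable (raw)] =
  sigma_finite_measure.borel_measurable_nn_integral[OF sigma_finite_exp1_seq]

lemma nn_integral_exp1:
  "f \<in> borel_measurable borel \<Longrightarrow>
    (\<integral>\<^sup>+x. f x \<partial>exp1) = (\<integral>\<^sup>+x. ennreal (exponential_density 1 x) * f x \<partial>lborel)"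
  by (subst nn_integral_density) auto

lemma nn_integral_exp1_seq_case_nat:
  "f \<in> borel_measurable exp1_seq \<Longrightarrow>
    (\<integral>\<^sup>+e. f e \<partial>exp1_seq) = (\<integral>\<^sup>+x. \<integral>\<^sup>+e. f (case_nat x e) \<partial>exp1_seq \<partial>exp1)"
  by (rule nn_integral_PiM_nat_case_nat[OF prob_space_exp1])

lemma AE_exp1_nonneg: "AE x in exp1. 0 \<le> x"
  by (subst AE_density) (auto simp: exponential_density_def)

text \<open>With i.i.d. Exp(1) gaps e these are the points of a rate-1 Poisson process on (c, \<infinity>);
  the paper's T_i is arrivals 0 e i.\<close>
definition arrivals :: "real \<Rightarrow> (nat \<Rightarrow> real) \<Rightarrow> nat \<Rightarrow> real" where
  "arrivals c e n = c + (\<Sum>j\<le>n. e j)"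

lemma arrivals_case_nat: "arrivals c (case_nat x e) = case_nat (c + x) (arrivals (c + x) e)"
proof
  fix n show "arrivals c (case_nat x e) n = case_nat (c + x) (arrivals (c + x) e) n"
    by (cases n) (simp_all add: arrivals_def sum.atMost_Suc_shift del: sum.atMost_Suc)
qed

lemma measurable_arrivals[measurable (raw)]:
  assumes [measurable]: "f \<in> borel_measurable N" and g: "g \<in> measurable N exp1_seq"
  shows "(\<lambda>x. arrivals (f x) (g x) j) \<in> borel_measurable N"
proof -
  have [measurable]: "(\<lambda>x. g x i) \<in> borel_measurable N" for i
    using measurable_compose[OF g measurable_component_singleton[of i UNIV "\<lambda>_. exp1"]]
    by (simp add: measurable_cong_sets[OF refl sets_exp1])
  show ?thesis unfolding arrivals_def by measurable
qed

lemma measurable_arrivals_seq[measurable (raw)]: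
  "f \<in> borel_measurable N \<Longrightarrow> g \<in> measurable N exp1_seq \<Longrightarrow>
    (\<lambda>x. arrivals (f x) (g x)) \<in> measurable N real_seqs"
  by (rule measurable_PiM_single') (measurable, auto)

lemma AE_arrivals_unbounded: "AE e in exp1_seq. \<forall>t. \<exists>j. t < arrivals c e j"
proof -
  interpret exp1: prob_space exp1 by (rule prob_space_exp1)
  have "measure exp1 {..real m} < 1" for m :: nat
  proof -
    have "distributed exp1 lborel (\<lambda>x. x) (exponential_density 1)"
      by (simp add: distributed_def distr_id2)
    from exp1.exponential_distributedD_le[OF this, of "real m"]
    show ?thesis by (simp add: atMost_def)
  qed
  then have "AE e in exp1_seq. \<exists>j. e j \<notin> {..real m}" for m :: nat
    by (intro AE_PiM_nat_exists_notin[OF prob_space_exp1]) auto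
  then have "AE e in exp1_seq. \<forall>m::nat. \<exists>j. real m < e j"
    by (subst AE_all_countable) (auto simp: not_le)
  moreover have "AE e in exp1_seq. \<forall>j. 0 \<le> e j"
    by (subst AE_all_countable) (auto intro: AE_PiM_component prob_space_exp1 AE_exp1_nonneg)
  ultimately show ?thesis
  proof eventually_elim
    case (elim e)
    show ?case
    proof
      fix t
      obtain m :: nat where "t - c < real m" using reals_Archimedean2 by blast
      moreover obtain j where "real m < e j" using elim(1) by force
      moreover have "e j \<le> (\<Sum>i\<le>j. e i)"
        by (rule member_le_sum) (use elim(2) in auto)
      ultimately show "\<exists>j. t < arrivals c e j" by (auto simp: arrivals_def intro!: exI[of _ j])
    qed
  qed
qed

text \<open>The pair (c + x, c + x + x') has Lebesgue density exp (c - y) at (t, y) on c < t < y: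
  Lebesgue measure in t times the density of c + x in y.\<close>
lemma nn_integral_two_arrivals:
  fixes g :: "real \<Rightarrow> real \<Rightarrow> ennreal"
  assumes g[measurable]: "(\<lambda>(t, y). g t y) \<in> borel_measurable (borel \<Otimes>\<^sub>M borel)"
  shows "(\<integral>\<^sup>+x. \<integral>\<^sup>+x'. g (c + x) (c + x + x') \<partial>exp1 \<partial>exp1)
       = (\<integral>\<^sup>+t. indicator {c<..} t * \<integral>\<^sup>+x. (if t < c + x then g t (c + x) else 0) \<partial>exp1 \<partial>lborel)"
proof -
  let ?D = "\<lambda>x. ennreal (exponential_density 1 x)"
  have D_add: "?D (u + x) * (if 0 < x then v else 0) = ?D u * (?D x * (if 0 < x then v else 0))"
    if "0 < u" for u x v
    using that by (auto simp: exponential_density_def ennreal_mult'[symmetric] exp_add[symmetric] algebra_simps)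
  have shift: "(\<integral>\<^sup>+x. f x \<partial>lborel) = (\<integral>\<^sup>+x. f (a + x) \<partial>lborel)"
    if "f \<in> borel_measurable borel" for f :: "real \<Rightarrow> ennreal" and a
    using nn_integral_real_affine[OF that, of 1 a] by simp
  have "(\<integral>\<^sup>+t. indicator {c<..} t * \<integral>\<^sup>+x. (if t < c + x then g t (c + x) else 0) \<partial>exp1 \<partial>lborel)
      = (\<integral>\<^sup>+t. indicator {c<..} t * \<integral>\<^sup>+x. ?D x * (if t < c + x then g t (c + x) else 0) \<partial>lborel \<partial>lborel)"
    by (subst nn_integral_exp1) auto
  also have "\<dots> = (\<integral>\<^sup>+u. indicator {c<..} (c + u) * \<integral>\<^sup>+x. ?D x * (if c + u < c + x then g (c + u) (c + x) else 0) \<partial>lborel \<partial>lborel)"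
    by (subst shift[where a = c]) auto
  also have "\<dots> = (\<integral>\<^sup>+u. indicator {0<..} u * \<integral>\<^sup>+x'. ?D (u + x') * (if 0 < x' then g (c + u) (c + u + x') else 0) \<partial>lborel \<partial>lborel)"
    apply (intro nn_integral_cong)
    subgoal for u by (subst shift[where a = u]) (auto simp: indicator_def ac_simps cong: if_cong)
    done
  also have "\<dots> = (\<integral>\<^sup>+u. indicator {0<..} u * (?D u * \<integral>\<^sup>+x'. ?D x' * (if 0 < x' then g (c + u) (c + u + x') else 0) \<partial>lborel) \<partial>lborel)"
    by (intro nn_integral_cong) (auto simp: indicator_def D_add nn_integral_cmult)
  also have "\<dots> = (\<integral>\<^sup>+u. ?D u * \<integral>\<^sup>+x'. ?D x' * g (c + u) (c + u + x') \<partial>lborel \<partial>lborel)"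
  proof (rule nn_integral_cong_AE)
    have inner: "(\<integral>\<^sup>+x'. ?D x' * (if 0 < x' then g (c + u) (c + u + x') else 0) \<partial>lborel)
        = (\<integral>\<^sup>+x'. ?D x' * g (c + u) (c + u + x') \<partial>lborel)" for u
      by (intro nn_integral_cong_AE, use AE_lborel_singleton[of 0] in eventually_elim)
        (auto simp: exponential_density_def)
    show "AE u in lborel. indicator {0<..} u * (?D u * \<integral>\<^sup>+x'. ?D x' * (if 0 < x' then g (c + u) (c + u + x') else 0) \<partial>lborel)
        = ?D u * \<integral>\<^sup>+x'. ?D x' * g (c + u) (c + u + x') \<partial>lborel"
      using AE_lborel_singleton[of 0]
      by eventually_elim (simp only: inner, auto simp: indicator_def exponential_density_def)
  qed
  also have "\<dots> = (\<integral>\<^sup>+x. \<integral>\<^sup>+x'. g (c + x) (c + x + x') \<partial>exp1 \<partial>exp1)"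
    by (subst (1 2) nn_integral_exp1) auto
  finally show ?thesis ..
qed

lemma mecke_first_arrival:
  assumes h[measurable]: "h \<in> borel_measurable (borel \<Otimes>\<^sub>M real_seqs)"
  shows "(\<integral>\<^sup>+e. h (arrivals c e 0, del_index 0 (arrivals c e)) \<partial>exp1_seq)
       = (\<integral>\<^sup>+t. indicator {c<..} t * \<integral>\<^sup>+e. (if t < arrivals c e 0 then h (t, arrivals c e) else 0) \<partial>exp1_seq \<partial>lborel)"
proof -
  define g where "g t y = (\<integral>\<^sup>+e. h (t, case_nat y (arrivals y e)) \<partial>exp1_seq)" for t y
  have g[measurable]: "(\<lambda>(t, y). g t y) \<in> borel_measurable (borel \<Otimes>\<^sub>M borel)"
    unfolding g_def split_beta' by measurable
  have "(\<integral>\<^sup>+e. h (arrivals c e 0, del_index 0 (arrivals c e)) \<partial>exp1_seq)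
      = (\<integral>\<^sup>+x. \<integral>\<^sup>+e. h (c + x, arrivals (c + x) e) \<partial>exp1_seq \<partial>exp1)"
    by (subst nn_integral_exp1_seq_case_nat) (auto simp: arrivals_case_nat)
  also have "\<dots> = (\<integral>\<^sup>+x. \<integral>\<^sup>+x'. g (c + x) (c + x + x') \<partial>exp1 \<partial>exp1)"
    by (intro nn_integral_cong, subst nn_integral_exp1_seq_case_nat) (auto simp: arrivals_case_nat g_def)
  also have "\<dots> = (\<integral>\<^sup>+t. indicator {c<..} t * \<integral>\<^sup>+x. (if t < c + x then g t (c + x) else 0) \<partial>exp1 \<partial>lborel)"
    by (rule nn_integral_two_arrivals[OF g])
  also have "\<dots> = (\<integral>\<^sup>+t. indicator {c<..} t * \<integral>\<^sup>+e. (if t < arrivals c e 0 then h (t, arrivals c e) else 0) \<partial>exp1_seq \<partial>lborel)"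
  proof (intro nn_integral_cong)
    fix t
    have "(\<integral>\<^sup>+e. (if t < arrivals c e 0 then h (t, arrivals c e) else 0) \<partial>exp1_seq)
        = (\<integral>\<^sup>+x. \<integral>\<^sup>+e. (if t < c + x then h (t, case_nat (c + x) (arrivals (c + x) e)) else 0) \<partial>exp1_seq \<partial>exp1)"
      by (subst nn_integral_exp1_seq_case_nat) (auto simp: arrivals_case_nat cong: if_cong)
    also have "\<dots> = (\<integral>\<^sup>+x. (if t < c + x then g t (c + x) else 0) \<partial>exp1)"
      by (intro nn_integral_cong) (auto simp: g_def)
    finally show "indicator {c<..} t * (\<integral>\<^sup>+x. (if t < c + x then g t (c + x) else 0) \<partial>exp1)
        = indicator {c<..} t * (\<integral>\<^sup>+e. (if t < arrivals c e 0 then h (t, arrivals c e) else 0) \<partial>exp1_seq)"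
      by simp
  qed
  finally show ?thesis .
qed

text \<open>The weight selects the configurations in which the reinserted point t becomes the k-th one.\<close>
lemma mecke_arrival:
  assumes "h \<in> borel_measurable (borel \<Otimes>\<^sub>M real_seqs)"
  shows "(\<integral>\<^sup>+e. h (arrivals c e k, del_index k (arrivals c e)) \<partial>exp1_seq)
       = (\<integral>\<^sup>+t. indicator {c<..} t * \<integral>\<^sup>+e. (if (\<forall>j<k. arrivals c e j \<le> t) \<and> t < arrivals c e k
            then h (t, arrivals c e) else 0) \<partial>exp1_seq \<partial>lborel)"
  using assms
proof (induction k arbitrary: c h)
  case 0
  then show ?case using mecke_first_arrival[OF 0] by simp
next
  case (Suc k)
  note h[measurable] = Suc.prems
  have sigma_finite_exp1: "sigma_finite_measure exp1"
    by (rule prob_space_imp_sigma_finite[OF prob_space_exp1])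
  define I where "I x t = (\<integral>\<^sup>+e. (if (\<forall>j<k. arrivals (c + x) e j \<le> t) \<and> t < arrivals (c + x) e k
      then h (t, case_nat (c + x) (arrivals (c + x) e)) else 0) \<partial>exp1_seq)" for x t
  have I[measurable]: "(\<lambda>(x, t). I x t) \<in> borel_measurable (borel \<Otimes>\<^sub>M borel)"
    unfolding I_def split_beta' by measurable
  have "(\<integral>\<^sup>+e. h (arrivals c e (Suc k), del_index (Suc k) (arrivals c e)) \<partial>exp1_seq)
      = (\<integral>\<^sup>+x. \<integral>\<^sup>+e. h (arrivals (c + x) e k, case_nat (c + x) (del_index k (arrivals (c + x) e))) \<partial>exp1_seq \<partial>exp1)"
    by (subst nn_integral_exp1_seq_case_nat) (auto simp: arrivals_case_nat)
  also have "\<dots> = (\<integral>\<^sup>+x. \<integral>\<^sup>+t. indicator {c + x<..} t * I x t \<partial>lborel \<partial>exp1)"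
  proof (intro nn_integral_cong)
    fix x
    have "(\<lambda>w. h (fst w, case_nat (c + x) (snd w))) \<in> borel_measurable (borel \<Otimes>\<^sub>M real_seqs)"
      by measurable
    from Suc.IH[OF this, of "c + x"]
    show "(\<integral>\<^sup>+e. h (arrivals (c + x) e k, case_nat (c + x) (del_index k (arrivals (c + x) e))) \<partial>exp1_seq)
        = (\<integral>\<^sup>+t. indicator {c + x<..} t * I x t \<partial>lborel)"
      by (simp add: I_def cong: if_cong)
  qed
  also have "\<dots> = (\<integral>\<^sup>+x. \<integral>\<^sup>+t. indicator {c<..} t * (if c + x \<le> t then I x t else 0) \<partial>lborel \<partial>exp1)"
    using AE_exp1_nonneg
  proof (intro nn_integral_cong_AE, eventually_elim)
    case (elim x)
    show ?case
      by (intro nn_integral_cong_AE, use AE_lborel_singleton[of "c + x"] in eventually_elim)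
        (use elim in \<open>auto simp: indicator_def\<close>)
  qed
  also have "\<dots> = (\<integral>\<^sup>+t. \<integral>\<^sup>+x. indicator {c<..} t * (if c + x \<le> t then I x t else 0) \<partial>exp1 \<partial>lborel)"
    by (rule nn_integral_swap[OF sigma_finite_exp1 lborel.sigma_finite_measure_axioms]) measurable
  also have "\<dots> = (\<integral>\<^sup>+t. indicator {c<..} t * \<integral>\<^sup>+e. (if (\<forall>j<Suc k. arrivals c e j \<le> t) \<and> t < arrivals c e (Suc k)
      then h (t, arrivals c e) else 0) \<partial>exp1_seq \<partial>lborel)"
  proof (intro nn_integral_cong)
    fix t
    have "(\<integral>\<^sup>+e. (if (\<forall>j<Suc k. arrivals c e j \<le> t) \<and> t < arrivals c e (Suc k) then h (t, arrivals c e) else 0) \<partial>exp1_seq)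
        = (\<integral>\<^sup>+x. (if c + x \<le> t then I x t else 0) \<partial>exp1)"
      by (subst nn_integral_exp1_seq_case_nat, measurable, intro nn_integral_cong)
        (auto simp: arrivals_case_nat I_def All_less_Suc2 cong: if_cong)
    then show "(\<integral>\<^sup>+x. indicator {c<..} t * (if c + x \<le> t then I x t else 0) \<partial>exp1)
        = indicator {c<..} t * (\<integral>\<^sup>+e. (if (\<forall>j<Suc k. arrivals c e j \<le> t) \<and> t < arrivals c e (Suc k)
            then h (t, arrivals c e) else 0) \<partial>exp1_seq)"
      by (simp add: nn_integral_cmult)
  qed
  finally show ?case .
qed

lemma mecke_arrivals:
  assumes h[measurable]: "h \<in> borel_measurable (borel \<Otimes>\<^sub>M real_seqs)"
  shows "(\<Sum>k. \<integral>\<^sup>+e. h (arrivals c e k, del_index k (arrivals c e)) \<partial>exp1_seq)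
       = (\<integral>\<^sup>+t. indicator {c<..} t * \<integral>\<^sup>+e. h (t, arrivals c e) \<partial>exp1_seq \<partial>lborel)"
proof -
  let ?F = "\<lambda>t e k. if (\<forall>j<k. arrivals c e j \<le> t) \<and> t < arrivals c e k then h (t, arrivals c e) else 0"
  have "(\<Sum>k. \<integral>\<^sup>+e. h (arrivals c e k, del_index k (arrivals c e)) \<partial>exp1_seq)
      = (\<Sum>k. \<integral>\<^sup>+t. indicator {c<..} t * \<integral>\<^sup>+e. ?F t e k \<partial>exp1_seq \<partial>lborel)"
    by (simp only: mecke_arrival[OF h])
  also have "\<dots> = (\<integral>\<^sup>+t. (\<Sum>k. indicator {c<..} t * \<integral>\<^sup>+e. ?F t e k \<partial>exp1_seq) \<partial>lborel)"
    by (rule nn_integral_suminf[symmetric]) measurable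
  also have "\<dots> = (\<integral>\<^sup>+t. indicator {c<..} t * \<integral>\<^sup>+e. (\<Sum>k. ?F t e k) \<partial>exp1_seq \<partial>lborel)"
  proof (intro nn_integral_cong)
    fix t
    have "(\<Sum>k. \<integral>\<^sup>+e. ?F t e k \<partial>exp1_seq) = (\<integral>\<^sup>+e. (\<Sum>k. ?F t e k) \<partial>exp1_seq)"
      by (rule nn_integral_suminf[symmetric]) measurable
    then show "(\<Sum>k. indicator {c<..} t * \<integral>\<^sup>+e. ?F t e k \<partial>exp1_seq)
        = indicator {c<..} t * \<integral>\<^sup>+e. (\<Sum>k. ?F t e k) \<partial>exp1_seq"
      by (simp add: ennreal_suminf_cmult)
  qed
  also have "\<dots> = (\<integral>\<^sup>+t. indicator {c<..} t * \<integral>\<^sup>+e. h (t, arrivals c e) \<partial>exp1_seq \<partial>lborel)"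
  proof (intro nn_integral_cong)
    fix t
    have "AE e in exp1_seq. (\<Sum>k. ?F t e k) = h (t, arrivals c e)"
      using AE_arrivals_unbounded[of c]
    proof eventually_elim
      case (elim e)
      then show ?case
        using suminf_if_first_index[of "\<lambda>j. t < arrivals c e j" "h (t, arrivals c e)"]
        by (simp add: not_less)
    qed
    then show "indicator {c<..} t * (\<integral>\<^sup>+e. (\<Sum>k. ?F t e k) \<partial>exp1_seq)
        = indicator {c<..} t * (\<integral>\<^sup>+e. h (t, arrivals c e) \<partial>exp1_seq)"
      by (simp add: nn_integral_cong_AE)
  qed
  finally show ?thesis .
qed

lemma mecke_marked_arrivals:
  assumes Q: "prob_space Q"
    and g[measurable]: "g \<in> borel_measurable (borel \<Otimes>\<^sub>M (Q \<Otimes>\<^sub>M (real_seqs \<Otimes>\<^sub>M PiM UNIV (\<lambda>_::nat. Q))))"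
  shows "(\<Sum>k. \<integral>\<^sup>+\<omega>. g (arrivals c (snd \<omega>) k, fst \<omega> k, del_index k (arrivals c (snd \<omega>)), del_index k (fst \<omega>))
            \<partial>(PiM UNIV (\<lambda>_. Q) \<Otimes>\<^sub>M exp1_seq))
       = (\<integral>\<^sup>+t. indicator {c<..} t * \<integral>\<^sup>+z. \<integral>\<^sup>+\<omega>. g (t, z, arrivals c (snd \<omega>), fst \<omega>)
            \<partial>(PiM UNIV (\<lambda>_. Q) \<Otimes>\<^sub>M exp1_seq) \<partial>Q \<partial>lborel)"
proof -
  let ?Qs = "PiM UNIV (\<lambda>_::nat. Q)"
  have sigma_finite_Q: "sigma_finite_measure Q"
    by (rule prob_space_imp_sigma_finite[OF Q])
  note [measurable (raw)] =
    sigma_finite_measure.borel_measurable_nn_integral[OF sigma_finite_PiM_nat[OF Q]]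
    sigma_finite_measure.borel_measurable_nn_integral[OF sigma_finite_Q]
  note pair_snd = nn_integral_pair_measure_snd[OF sigma_finite_PiM_nat[OF Q] sigma_finite_exp1_seq]
  define H where "H w = (\<integral>\<^sup>+z. \<integral>\<^sup>+zs. g (fst w, z, snd w, zs) \<partial>?Qs \<partial>Q)" for w
  have H[measurable]: "H \<in> borel_measurable (borel \<Otimes>\<^sub>M real_seqs)"
    unfolding H_def by measurable
  have "(\<integral>\<^sup>+\<omega>. g (arrivals c (snd \<omega>) k, fst \<omega> k, del_index k (arrivals c (snd \<omega>)), del_index k (fst \<omega>)) \<partial>(?Qs \<Otimes>\<^sub>M exp1_seq))
      = (\<integral>\<^sup>+e. H (arrivals c e k, del_index k (arrivals c e)) \<partial>exp1_seq)" for k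
  proof -
    have "(\<integral>\<^sup>+\<omega>. g (arrivals c (snd \<omega>) k, fst \<omega> k, del_index k (arrivals c (snd \<omega>)), del_index k (fst \<omega>)) \<partial>(?Qs \<Otimes>\<^sub>M exp1_seq))
        = (\<integral>\<^sup>+e. \<integral>\<^sup>+zs. g (arrivals c e k, zs k, del_index k (arrivals c e), del_index k zs) \<partial>?Qs \<partial>exp1_seq)"
      by (subst pair_snd) auto
    also have "\<dots> = (\<integral>\<^sup>+e. H (arrivals c e k, del_index k (arrivals c e)) \<partial>exp1_seq)"
    proof (intro nn_integral_cong)
      fix e
      have "(\<lambda>w. g (arrivals c e k, fst w, del_index k (arrivals c e), snd w)) \<in> borel_measurable (Q \<Otimes>\<^sub>M ?Qs)"
        by measurable (auto simp: space_PiM intro: measurable_snd)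
      from nn_integral_PiM_del_index[OF Q this, of k]
      show "(\<integral>\<^sup>+zs. g (arrivals c e k, zs k, del_index k (arrivals c e), del_index k zs) \<partial>?Qs)
          = H (arrivals c e k, del_index k (arrivals c e))"
        by (simp add: H_def)
    qed
    finally show ?thesis .
  qed
  then have "(\<Sum>k. \<integral>\<^sup>+\<omega>. g (arrivals c (snd \<omega>) k, fst \<omega> k, del_index k (arrivals c (snd \<omega>)), del_index k (fst \<omega>)) \<partial>(?Qs \<Otimes>\<^sub>M exp1_seq))
      = (\<integral>\<^sup>+t. indicator {c<..} t * \<integral>\<^sup>+e. H (t, arrivals c e) \<partial>exp1_seq \<partial>lborel)"
    by (simp add: mecke_arrivals[OF H])
  also have "\<dots> = (\<integral>\<^sup>+t. indicator {c<..} t * \<integral>\<^sup>+z. \<integral>\<^sup>+\<omega>. g (t, z, arrivals c (snd \<omega>), fst \<omega>) \<partial>(?Qs \<Otimes>\<^sub>M exp1_seq) \<partial>Q \<partial>lborel)"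
  proof (intro nn_integral_cong arg_cong2[where f = "(*)"] refl)
    fix t :: real
    have "(\<integral>\<^sup>+e. H (t, arrivals c e) \<partial>exp1_seq) = (\<integral>\<^sup>+e. \<integral>\<^sup>+z. \<integral>\<^sup>+zs. g (t, z, arrivals c e, zs) \<partial>?Qs \<partial>Q \<partial>exp1_seq)"
      by (simp add: H_def)
    also have "\<dots> = (\<integral>\<^sup>+z. \<integral>\<^sup>+e. \<integral>\<^sup>+zs. g (t, z, arrivals c e, zs) \<partial>?Qs \<partial>exp1_seq \<partial>Q)"
      by (rule nn_integral_swap[OF sigma_finite_exp1_seq sigma_finite_Q]) measurable
    also have "\<dots> = (\<integral>\<^sup>+z. \<integral>\<^sup>+\<omega>. g (t, z, arrivals c (snd \<omega>), fst \<omega>) \<partial>(?Qs \<Otimes>\<^sub>M exp1_seq) \<partial>Q)"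
      by (intro nn_integral_cong, subst pair_snd) auto
    finally show "(\<integral>\<^sup>+e. H (t, arrivals c e) \<partial>exp1_seq)
        = (\<integral>\<^sup>+z. \<integral>\<^sup>+\<omega>. g (t, z, arrivals c (snd \<omega>), fst \<omega>) \<partial>(?Qs \<Otimes>\<^sub>M exp1_seq) \<partial>Q)" .
  qed
  finally show ?thesis .
qed

subsection \<open>Poisson private representation\<close>

definition scaled_time :: "real \<Rightarrow> real \<Rightarrow> ereal" where
  "scaled_time t d = (if d = 0 then \<infinity> else ereal (t / d))"

definition neg_powr_weight :: "real \<Rightarrow> ereal \<Rightarrow> ennreal" where
  "neg_powr_weight a u = (case u of ereal t \<Rightarrow> ennreal (t powr (- a)) | _ \<Rightarrow> 0)"

text \<open>The probability that PPR selects the point at scaled time u when the other points are at v.\<close>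
definition ppr_select :: "ereal \<Rightarrow> ereal \<Rightarrow> (nat \<Rightarrow> ereal) \<Rightarrow> ennreal" where
  "ppr_select \<alpha> u v =
    (if \<alpha> = \<infinity> then (if \<forall>i. u < v i then 1 else 0)
     else neg_powr_weight (real_of_ereal \<alpha>) u /
       (neg_powr_weight (real_of_ereal \<alpha>) u + (\<Sum>i. neg_powr_weight (real_of_ereal \<alpha>) (v i))))"

abbreviation ereal_seqs :: "(nat \<Rightarrow> ereal) measure" where
  "ereal_seqs \<equiv> PiM UNIV (\<lambda>i::nat. borel)"

lemma neg_powr_weight_less_top: "neg_powr_weight a u < \<top>"
  by (cases u) (auto simp: neg_powr_weight_def)

lemma measurable_neg_powr_weight[measurable]: "neg_powr_weight a \<in> borel_measurable borel"
proof -
  have "neg_powr_weight a = (\<lambda>u. if u = \<infinity> \<or> u = -\<infinity> then 0 else ennreal (real_of_ereal u powr (- a)))"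
    by (auto simp: neg_powr_weight_def fun_eq_iff split: ereal.split)
  then show ?thesis by simp
qed

lemma measurable_scaled_time[measurable]:
  "(\<lambda>w. scaled_time (fst w) (snd w)) \<in> borel_measurable (borel \<Otimes>\<^sub>M borel)"
  unfolding scaled_time_def by measurable

lemma measurable_scaled_time'[measurable (raw)]:
  "f \<in> borel_measurable N \<Longrightarrow> g \<in> borel_measurable N \<Longrightarrow> (\<lambda>x. scaled_time (f x) (g x)) \<in> borel_measurable N"
  using measurable_compose[OF measurable_Pair measurable_scaled_time, of f N g] by simp

lemma measurable_scaled_time_seq:
  assumes t: "t \<in> measurable N real_seqs" and zs: "zs \<in> measurable N (PiM UNIV (\<lambda>_::nat. M))"
    and f[measurable]: "f \<in> borel_measurable M"
  shows "(\<lambda>x i. scaled_time (t x i) (f (zs x i))) \<in> measurable N ereal_seqs"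
proof (rule measurable_PiM_single')
  fix i
  have [measurable]: "(\<lambda>x. t x i) \<in> borel_measurable N"
    using measurable_compose[OF t measurable_component_singleton[of i UNIV "\<lambda>_. borel"]] by simp
  have [measurable]: "(\<lambda>x. zs x i) \<in> measurable N M"
    using measurable_compose[OF zs measurable_component_singleton[of i UNIV "\<lambda>_. M"]] by simp
  show "(\<lambda>x. scaled_time (t x i) (f (zs x i))) \<in> borel_measurable N" by measurable
qed auto

lemma measurable_ppr_select[measurable]:
  "(\<lambda>w. ppr_select \<alpha> (fst w) (snd w)) \<in> borel_measurable (borel \<Otimes>\<^sub>M ereal_seqs)"
  unfolding ppr_select_def by measurable

lemma measurable_ppr_select'[measurable (raw)]:
  "a \<in> borel_measurable N \<Longrightarrow> b \<in> measurable N ereal_seqs \<Longrightarrow> (\<lambda>x. ppr_select \<alpha> (a x) (b x)) \<in> borel_measurable N"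
  using measurable_compose[OF measurable_Pair measurable_ppr_select, of a N b] by simp

lemma ppr_select_infinity[simp]: "ppr_select \<alpha> \<infinity> v = 0"
  by (simp add: ppr_select_def neg_powr_weight_def)

lemma measurable_ppr_dens[measurable]: "ppr_dens Q P \<in> borel_measurable Q"
  unfolding ppr_dens_def by measurable

lemma ppr_Ttilde_eq_scaled_time:
  "ppr_Ttilde Q P \<omega> = (\<lambda>i. scaled_time (arrivals 0 (snd \<omega>) i) (ppr_dens Q P (fst \<omega> i)))"
  by (simp add: ppr_Ttilde_def scaled_time_def ppr_T_def arrivals_def fun_eq_iff)

lemma measurable_ppr_Ttilde[measurable]: "ppr_Ttilde Q P \<in> measurable (ppr_space Q) ereal_seqs"
  unfolding ppr_Ttilde_eq_scaled_time ppr_space_def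
  by (rule measurable_scaled_time_seq) measurable

lemma measurable_ppr_space_fst_nth[measurable]: "(\<lambda>\<omega>. fst \<omega> k) \<in> measurable (ppr_space Q) Q"
  unfolding ppr_space_def
  using measurable_compose[OF measurable_fst measurable_component_singleton[of k UNIV "\<lambda>_. Q"]] by simp

lemma prob_space_ppr_space: "prob_space Q \<Longrightarrow> prob_space (ppr_space Q)"
  unfolding ppr_space_def by (intro prob_space_pair prob_space_PiM_nat prob_space_exp1)

lemma ppr_index_prob_eq_select:
  "ppr_index_prob \<alpha> Q P \<omega> k = ppr_select \<alpha> (ppr_Ttilde Q P \<omega> k) (del_index k (ppr_Ttilde Q P \<omega>))"
proof -
  have "ppr_weight a Q P \<omega> = (\<lambda>i. neg_powr_weight a (ppr_Ttilde Q P \<omega> i))" for a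
    by (simp add: ppr_weight_def neg_powr_weight_def fun_eq_iff)
  moreover have "(\<Sum>i. neg_powr_weight a (ppr_Ttilde Q P \<omega> i))
      = neg_powr_weight a (ppr_Ttilde Q P \<omega> k) + (\<Sum>i. neg_powr_weight a (del_index k (ppr_Ttilde Q P \<omega>) i))" for a
    using suminf_del_index[of "\<lambda>i. neg_powr_weight a (ppr_Ttilde Q P \<omega> i)" k] by (simp add: del_index_def)
  ultimately show ?thesis
    unfolding ppr_index_prob_def ppr_select_def
    using all_del_index_iff[of k "\<lambda>x. ppr_Ttilde Q P \<omega> k < x" "ppr_Ttilde Q P \<omega>"] by simp
qed

lemma nn_integral_scaled_time:
  fixes F :: "ereal \<Rightarrow> ennreal"
  assumes F[measurable]: "F \<in> borel_measurable borel" and F_infinity: "F \<infinity> = 0" and d: "0 \<le> d"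
  shows "(\<integral>\<^sup>+t. indicator {0<..} t * F (scaled_time t d) \<partial>lborel)
       = ennreal d * (\<integral>\<^sup>+s. indicator {0<..} s * F (ereal s) \<partial>lborel)"
proof (cases "d = 0")
  case True
  then show ?thesis by (simp add: scaled_time_def F_infinity)
next
  case False
  with d have d: "0 < d" by simp
  have "(\<integral>\<^sup>+t. indicator {0<..} t * F (scaled_time t d) \<partial>lborel)
      = (\<integral>\<^sup>+t. indicator {0<..} t * F (ereal (t / d)) \<partial>lborel)"
    using d by (simp add: scaled_time_def)
  also have "\<dots> = ennreal \<bar>d\<bar> * (\<integral>\<^sup>+s. indicator {0<..} (0 + d * s) * F (ereal ((0 + d * s) / d)) \<partial>lborel)"
    by (rule nn_integral_real_affine) (use d in auto)
  also have "\<dots> = ennreal d * (\<integral>\<^sup>+s. indicator {0<..} s * F (ereal s) \<partial>lborel)"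
    using d by (intro arg_cong2[where f = "(*)"] nn_integral_cong) (auto simp: indicator_def zero_less_mult_iff)
  finally show ?thesis .
qed

lemma nn_integral_ppr_dens:
  assumes Q: "prob_space Q" and P: "prob_space P" "sets P = sets Q" and ac: "absolutely_continuous Q P"
    and A: "A \<in> sets Q"
  shows "(\<integral>\<^sup>+z. ennreal (ppr_dens Q P z) * indicator A z \<partial>Q) = emeasure P A"
proof -
  interpret Q: prob_space Q by fact
  have "emeasure P A = emeasure (density Q (RN_deriv Q P)) A"
    using Q.density_RN_deriv[OF ac P(2)] by simp
  also have "\<dots> = (\<integral>\<^sup>+z. RN_deriv Q P z * indicator A z \<partial>Q)"
    using A by (simp add: emeasure_density)
  also have "\<dots> = (\<integral>\<^sup>+z. ennreal (ppr_dens Q P z) * indicator A z \<partial>Q)"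
    using Q.RN_deriv_finite[OF prob_space_imp_sigma_finite[OF P(1)] ac P(2)]
    by (intro nn_integral_cong_AE) (auto simp: ppr_dens_def ennreal_enn2real_if)
  finally show ?thesis ..
qed

lemma nn_integral_scaled_marks:
  assumes Q: "sigma_finite_measure Q" and f[measurable]: "f \<in> borel_measurable Q" and f_nonneg: "\<And>z. 0 \<le> f z"
    and Xi[measurable]: "Xi \<in> borel_measurable borel" and Xi_infinity: "Xi \<infinity> = 0"
    and A[measurable]: "A \<in> sets Q"
  shows "(\<integral>\<^sup>+t. indicator {0<..} t * \<integral>\<^sup>+z. indicator A z * Xi (scaled_time t (f z)) \<partial>Q \<partial>lborel)
       = (\<integral>\<^sup>+z. ennreal (f z) * indicator A z \<partial>Q) * (\<integral>\<^sup>+s. indicator {0<..} s * Xi (ereal s) \<partial>lborel)"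
proof -
  have "(\<integral>\<^sup>+t. indicator {0<..} t * \<integral>\<^sup>+z. indicator A z * Xi (scaled_time t (f z)) \<partial>Q \<partial>lborel)
      = (\<integral>\<^sup>+t. \<integral>\<^sup>+z. indicator A z * (indicator {0<..} t * Xi (scaled_time t (f z))) \<partial>Q \<partial>lborel)"
    by (intro nn_integral_cong) (simp add: nn_integral_cmult[symmetric] mult_ac)
  also have "\<dots> = (\<integral>\<^sup>+z. \<integral>\<^sup>+t. indicator A z * (indicator {0<..} t * Xi (scaled_time t (f z))) \<partial>lborel \<partial>Q)"
    by (rule nn_integral_swap[OF lborel.sigma_finite_measure_axioms Q]) measurable
  also have "\<dots> = (\<integral>\<^sup>+z. indicator A z * (ennreal (f z) * (\<integral>\<^sup>+s. indicator {0<..} s * Xi (ereal s) \<partial>lborel)) \<partial>Q)"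
    by (intro nn_integral_cong)
      (simp add: nn_integral_cmult nn_integral_scaled_time[OF Xi Xi_infinity f_nonneg])
  also have "\<dots> = (\<integral>\<^sup>+z. ennreal (f z) * indicator A z \<partial>Q) * (\<integral>\<^sup>+s. indicator {0<..} s * Xi (ereal s) \<partial>lborel)"
    by (subst nn_integral_multc[symmetric]) (auto simp: mult_ac intro!: nn_integral_cong)
  finally show ?thesis .
qed

text \<open>The Mecke equation of the marked points (Z_k, T_k / (dP/dQ)(Z_k)), a Poisson process of
  intensity P \<otimes> Lebesgue on (0, \<infinity>).\<close>
lemma ppr_mecke:
  assumes Q: "prob_space Q" and P: "prob_space P" "sets P = sets Q" and ac: "absolutely_continuous Q P"
    and Psi[measurable]: "(\<lambda>w. Psi (fst w) (snd w)) \<in> borel_measurable (borel \<Otimes>\<^sub>M ereal_seqs)"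
    and Psi_infinity: "\<And>v. Psi \<infinity> v = 0"
    and A[measurable]: "A \<in> sets Q"
  shows "(\<Sum>k. \<integral>\<^sup>+\<omega>. indicator A (fst \<omega> k) * Psi (ppr_Ttilde Q P \<omega> k) (del_index k (ppr_Ttilde Q P \<omega>)) \<partial>ppr_space Q)
       = emeasure P A * (\<integral>\<^sup>+s. indicator {0<..} s * \<integral>\<^sup>+\<omega>. Psi (ereal s) (ppr_Ttilde Q P \<omega>) \<partial>ppr_space Q \<partial>lborel)"
proof -
  let ?Qs = "PiM UNIV (\<lambda>_::nat. Q)"
  note [measurable (raw)] =
    sigma_finite_measure.borel_measurable_nn_integral[OF prob_space_imp_sigma_finite[OF prob_space_ppr_space[OF Q]]]
  have [measurable (raw)]: "(\<lambda>x. Psi (a x) (b x)) \<in> borel_measurable N"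
    if "a \<in> borel_measurable N" "b \<in> measurable N ereal_seqs" for a b and N :: "'b measure"
    using measurable_compose[OF measurable_Pair[OF that] Psi] by simp
  define f where "f = ppr_dens Q P"
  have f[measurable]: "f \<in> borel_measurable Q"
    unfolding f_def by measurable
  define g where "g w = (case w of (t, z, s, zs) \<Rightarrow>
      indicator A z * Psi (scaled_time t (f z)) (\<lambda>i. scaled_time (s i) (f (zs i))))" for w
  have [measurable]: "(\<lambda>w. \<lambda>i. scaled_time (fst (snd (snd w)) i) (f (snd (snd (snd w)) i)))
      \<in> measurable (borel \<Otimes>\<^sub>M (Q \<Otimes>\<^sub>M (real_seqs \<Otimes>\<^sub>M ?Qs))) ereal_seqs"
    by (rule measurable_scaled_time_seq) measurable
  have g[measurable]: "g \<in> borel_measurable (borel \<Otimes>\<^sub>M (Q \<Otimes>\<^sub>M (real_seqs \<Otimes>\<^sub>M ?Qs)))"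
    unfolding g_def split_beta' by measurable
  define Xi where "Xi u = (\<integral>\<^sup>+\<omega>. Psi u (ppr_Ttilde Q P \<omega>) \<partial>ppr_space Q)" for u
  have Xi[measurable]: "Xi \<in> borel_measurable borel"
    unfolding Xi_def by measurable
  have "(\<Sum>k. \<integral>\<^sup>+\<omega>. indicator A (fst \<omega> k) * Psi (ppr_Ttilde Q P \<omega> k) (del_index k (ppr_Ttilde Q P \<omega>)) \<partial>ppr_space Q)
      = (\<Sum>k. \<integral>\<^sup>+\<omega>. g (arrivals 0 (snd \<omega>) k, fst \<omega> k, del_index k (arrivals 0 (snd \<omega>)), del_index k (fst \<omega>)) \<partial>(?Qs \<Otimes>\<^sub>M exp1_seq))"
    by (simp add: ppr_space_def g_def f_def ppr_Ttilde_eq_scaled_time del_index_def[abs_def])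
  also have "\<dots> = (\<integral>\<^sup>+t. indicator {0<..} t * \<integral>\<^sup>+z. \<integral>\<^sup>+\<omega>. g (t, z, arrivals 0 (snd \<omega>), fst \<omega>) \<partial>(?Qs \<Otimes>\<^sub>M exp1_seq) \<partial>Q \<partial>lborel)"
    by (rule mecke_marked_arrivals[OF Q g])
  also have "\<dots> = (\<integral>\<^sup>+t. indicator {0<..} t * \<integral>\<^sup>+z. indicator A z * Xi (scaled_time t (f z)) \<partial>Q \<partial>lborel)"
  proof (intro nn_integral_cong arg_cong2[where f = "(*)"] refl)
    fix t z
    have "(\<integral>\<^sup>+\<omega>. g (t, z, arrivals 0 (snd \<omega>), fst \<omega>) \<partial>(?Qs \<Otimes>\<^sub>M exp1_seq))
        = (\<integral>\<^sup>+\<omega>. indicator A z * Psi (scaled_time t (f z)) (ppr_Ttilde Q P \<omega>) \<partial>ppr_space Q)"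
      by (simp add: g_def f_def ppr_space_def ppr_Ttilde_eq_scaled_time)
    then show "(\<integral>\<^sup>+\<omega>. g (t, z, arrivals 0 (snd \<omega>), fst \<omega>) \<partial>(?Qs \<Otimes>\<^sub>M exp1_seq))
        = indicator A z * Xi (scaled_time t (f z))"
      unfolding Xi_def by (simp add: nn_integral_cmult)
  qed
  also have "\<dots> = (\<integral>\<^sup>+z. ennreal (f z) * indicator A z \<partial>Q) * (\<integral>\<^sup>+s. indicator {0<..} s * Xi (ereal s) \<partial>lborel)"
    by (rule nn_integral_scaled_marks[OF prob_space_imp_sigma_finite[OF Q]])
      (auto simp: f_def ppr_dens_def Xi_def Psi_infinity)
  finally show ?thesis
    by (simp add: nn_integral_ppr_dens[OF Q P ac A, folded f_def] Xi_def)
qed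

lemma ppr_mecke_total:
  assumes Q: "prob_space Q" and P: "prob_space P" "sets P = sets Q" and ac: "absolutely_continuous Q P"
    and Psi[measurable]: "(\<lambda>w. Psi (fst w) (snd w)) \<in> borel_measurable (borel \<Otimes>\<^sub>M ereal_seqs)"
    and Psi_infinity: "\<And>v. Psi \<infinity> v = 0"
  shows "(\<integral>\<^sup>+\<omega>. (\<Sum>k. Psi (ppr_Ttilde Q P \<omega> k) (del_index k (ppr_Ttilde Q P \<omega>))) \<partial>ppr_space Q)
       = (\<integral>\<^sup>+s. indicator {0<..} s * \<integral>\<^sup>+\<omega>. Psi (ereal s) (ppr_Ttilde Q P \<omega>) \<partial>ppr_space Q \<partial>lborel)"
proof -
  have [measurable (raw)]: "(\<lambda>x. Psi (a x) (b x)) \<in> borel_measurable N"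
    if "a \<in> borel_measurable N" "b \<in> measurable N ereal_seqs" for a b and N :: "'b measure"
    using measurable_compose[OF measurable_Pair[OF that] Psi] by simp
  have "(\<integral>\<^sup>+\<omega>. (\<Sum>k. Psi (ppr_Ttilde Q P \<omega> k) (del_index k (ppr_Ttilde Q P \<omega>))) \<partial>ppr_space Q)
      = (\<Sum>k. \<integral>\<^sup>+\<omega>. indicator (space Q) (fst \<omega> k) * Psi (ppr_Ttilde Q P \<omega> k) (del_index k (ppr_Ttilde Q P \<omega>)) \<partial>ppr_space Q)"
    by (subst nn_integral_suminf[symmetric], measurable, intro nn_integral_cong suminf_cong)
      (auto simp: ppr_space_def space_pair_measure space_PiM PiE_iff)
  also have "\<dots> = emeasure P (space Q) * (\<integral>\<^sup>+s. indicator {0<..} s * \<integral>\<^sup>+\<omega>. Psi (ereal s) (ppr_Ttilde Q P \<omega>) \<partial>ppr_space Q \<partial>lborel)"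
    by (rule ppr_mecke[OF Q P ac Psi Psi_infinity]) simp
  also have "emeasure P (space Q) = 1"
    using prob_space.emeasure_space_1[OF P(1)] sets_eq_imp_space_eq[OF P(2)] by simp
  finally show ?thesis by simp
qed

lemma ppr_campbell:
  assumes Q: "prob_space Q" and P: "prob_space P" "sets P = sets Q" and ac: "absolutely_continuous Q P"
    and \<phi>[measurable]: "\<phi> \<in> borel_measurable borel" and \<phi>_infinity: "\<phi> \<infinity> = 0"
  shows "(\<integral>\<^sup>+\<omega>. (\<Sum>k. \<phi> (ppr_Ttilde Q P \<omega> k)) \<partial>ppr_space Q) = (\<integral>\<^sup>+s. indicator {0<..} s * \<phi> (ereal s) \<partial>lborel)"
  using ppr_mecke_total[OF Q P ac, of "\<lambda>u v. \<phi> u"] \<phi>_infinity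
  by (simp add: prob_space.emeasure_space_1[OF prob_space_ppr_space[OF Q]])

lemma AE_ppr_space_fst:
  assumes "AE zs in PiM UNIV (\<lambda>_::nat. Q). R zs"
  shows "AE \<omega> in ppr_space Q. R (fst \<omega>)"
proof -
  have eq: "distr (ppr_space Q) (PiM UNIV (\<lambda>_::nat. Q)) fst = PiM UNIV (\<lambda>_::nat. Q)"
    unfolding ppr_space_def by (rule prob_space.distr_pair_fst[OF prob_space_PiM_nat[OF prob_space_exp1]])
  have "AE \<omega> in distr (ppr_space Q) (PiM UNIV (\<lambda>_::nat. Q)) fst. R \<omega>"
    unfolding eq by (rule assms)
  then show ?thesis
    by (rule AE_distrD[rotated]) (simp add: ppr_space_def)
qed

lemma AE_ppr_dens_nonzero:
  assumes Q: "prob_space Q" and P: "prob_space P" "sets P = sets Q" and ac: "absolutely_continuous Q P"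
  shows "AE \<omega> in ppr_space Q. \<exists>i. ppr_dens Q P (fst \<omega> i) \<noteq> 0"
proof -
  interpret Q: prob_space Q by fact
  define B where "B = {z \<in> space Q. ppr_dens Q P z = 0}"
  have B[measurable]: "B \<in> sets Q" unfolding B_def by measurable
  have "measure Q B < 1"
  proof (rule ccontr)
    assume "\<not> measure Q B < 1"
    then have "AE z in Q. z \<in> B"
      using Q.prob_le_1[of B] B by (simp add: Q.prob_eq_1)
    then have "(\<integral>\<^sup>+z. ennreal (ppr_dens Q P z) * indicator (space Q) z \<partial>Q) = 0"
      by (subst nn_integral_0_iff_AE) (auto simp: B_def elim!: eventually_mono)
    moreover have "(\<integral>\<^sup>+z. ennreal (ppr_dens Q P z) * indicator (space Q) z \<partial>Q) = 1"
      using nn_integral_ppr_dens[OF Q P ac, of "space Q"] prob_space.emeasure_space_1[OF P(1)]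
        sets_eq_imp_space_eq[OF P(2)] by simp
    ultimately show False by simp
  qed
  then have "AE zs in PiM UNIV (\<lambda>_::nat. Q). \<exists>i. zs i \<notin> B"
    by (rule AE_PiM_nat_exists_notin[OF Q B])
  then have "AE zs in PiM UNIV (\<lambda>_::nat. Q). \<exists>i. ppr_dens Q P (zs i) \<noteq> 0"
    using AE_space by eventually_elim (auto simp: B_def space_PiM)
  then show ?thesis
    by (rule AE_ppr_space_fst)
qed

lemma AE_ppr_Ttilde_pos:
  assumes Q: "prob_space Q" and P: "prob_space P" "sets P = sets Q" and ac: "absolutely_continuous Q P"
  shows "AE \<omega> in ppr_space Q. \<forall>k. 0 < ppr_Ttilde Q P \<omega> k"
proof -
  let ?\<phi> = "\<lambda>u::ereal. if u \<le> 0 then 1 else 0 :: ennreal"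
  have "(\<lambda>s. indicator {0<..} s * ?\<phi> (ereal s)) = (\<lambda>s. 0)"
    by (simp add: indicator_def fun_eq_iff)
  then have "(\<integral>\<^sup>+\<omega>. (\<Sum>k. ?\<phi> (ppr_Ttilde Q P \<omega> k)) \<partial>ppr_space Q) = 0"
    by (subst ppr_campbell[OF Q P ac]) simp_all
  then have "AE \<omega> in ppr_space Q. (\<Sum>k. ?\<phi> (ppr_Ttilde Q P \<omega> k)) = 0"
    by (subst (asm) nn_integral_0_iff_AE) measurable
  then show ?thesis
    by (rule eventually_mono) (auto simp: suminf_eq_zero_iff not_le split: if_splits)
qed

lemma AE_finite_ppr_Ttilde_le:
  assumes Q: "prob_space Q" and P: "prob_space P" "sets P = sets Q" and ac: "absolutely_continuous Q P"
  shows "AE \<omega> in ppr_space Q. \<forall>M::nat. finite {k. ppr_Ttilde Q P \<omega> k \<le> real M}"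
proof (subst AE_all_countable, intro allI)
  fix M :: nat
  let ?\<phi> = "\<lambda>u::ereal. if u \<le> real M then 1 else 0 :: ennreal"
  have "indicator {0<..} s * ?\<phi> (ereal s) = indicator {0<..real M} s" for s :: real
    by (simp add: indicator_def)
  then have "(\<integral>\<^sup>+\<omega>. (\<Sum>k. ?\<phi> (ppr_Ttilde Q P \<omega> k)) \<partial>ppr_space Q) = ennreal (real M)"
    by (subst ppr_campbell[OF Q P ac]) simp_all
  then have "AE \<omega> in ppr_space Q. (\<Sum>k. ?\<phi> (ppr_Ttilde Q P \<omega> k)) \<noteq> \<infinity>"
    by (intro nn_integral_PInf_AE) auto
  then show "AE \<omega> in ppr_space Q. finite {k. ppr_Ttilde Q P \<omega> k \<le> real M}"
  proof (rule eventually_mono)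
    fix \<omega> assume "(\<Sum>k. ?\<phi> (ppr_Ttilde Q P \<omega> k)) \<noteq> \<infinity>"
    moreover have "(\<Sum>k. ?\<phi> (ppr_Ttilde Q P \<omega> k))
        = (\<integral>\<^sup>+k. indicator {k. ppr_Ttilde Q P \<omega> k \<le> real M} k \<partial>count_space UNIV)"
      by (simp add: nn_integral_count_space_nat indicator_def of_bool_def)
    ultimately have "emeasure (count_space UNIV) {k. ppr_Ttilde Q P \<omega> k \<le> real M} \<noteq> \<infinity>"
      by simp
    then show "finite {k. ppr_Ttilde Q P \<omega> k \<le> real M}"
      by (metis emeasure_count_space_infinite infinity_ennreal_def subset_UNIV)
  qed
qed

lemma AE_ppr_Ttilde_tail_finite:
  assumes Q: "prob_space Q" and P: "prob_space P" "sets P = sets Q" and ac: "absolutely_continuous Q P"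
    and a: "1 < a"
  shows "AE \<omega> in ppr_space Q.
    (\<Sum>k. if 1 < ppr_Ttilde Q P \<omega> k then neg_powr_weight a (ppr_Ttilde Q P \<omega> k) else 0) \<noteq> \<infinity>"
proof -
  let ?\<phi> = "\<lambda>u. if 1 < u then neg_powr_weight a u else 0"
  have "((\<lambda>s. s powr (- a)) has_integral - (1 powr (- a + 1)) / (- a + 1)) {1..}"
    by (rule has_integral_powr_to_inf) (use a in auto)
  then have "(\<integral>\<^sup>+s. ennreal (indicator {1..} s * s powr (- a)) \<partial>lborel) < \<infinity>"
    by (subst nn_integral_has_integral_lebesgue) auto
  moreover have "(\<integral>\<^sup>+\<omega>. (\<Sum>k. ?\<phi> (ppr_Ttilde Q P \<omega> k)) \<partial>ppr_space Q)
      \<le> (\<integral>\<^sup>+s. ennreal (indicator {1..} s * s powr (- a)) \<partial>lborel)"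
    by (subst ppr_campbell[OF Q P ac])
      (auto simp: neg_powr_weight_def indicator_def intro!: nn_integral_mono)
  ultimately show ?thesis
    by (intro nn_integral_PInf_AE) auto
qed

text \<open>By the Mecke equation a tie with another point would have to happen at a Lebesgue-null set of times.\<close>
lemma AE_ppr_Ttilde_no_ties:
  assumes Q: "prob_space Q" and P: "prob_space P" "sets P = sets Q" and ac: "absolutely_continuous Q P"
  shows "AE \<omega> in ppr_space Q. \<forall>k i.
    ppr_Ttilde Q P \<omega> k = del_index k (ppr_Ttilde Q P \<omega>) i \<longrightarrow> ppr_Ttilde Q P \<omega> k = \<infinity>"
proof -
  define Psi where "Psi u v = (\<Sum>i. if u = v i \<and> u \<noteq> \<infinity> then 1 else 0 :: ennreal)" for u :: ereal and v
  have Psi_eq: "Psi u v = (\<Sum>i. if u \<le> v i \<and> v i \<le> u \<and> u < \<infinity> then 1 else 0)" for u v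
    unfolding Psi_def by (intro suminf_cong) (auto simp: less_top)
  have [measurable]: "(\<lambda>w. snd w i) \<in> borel_measurable (borel \<Otimes>\<^sub>M ereal_seqs)" for i
    using measurable_compose[OF measurable_snd measurable_component_singleton[of i UNIV "\<lambda>_. borel"]] by simp
  have Psi[measurable]: "(\<lambda>w. Psi (fst w) (snd w)) \<in> borel_measurable (borel \<Otimes>\<^sub>M ereal_seqs)"
    unfolding Psi_eq by measurable
  have [measurable (raw)]: "(\<lambda>x. Psi (a x) (b x)) \<in> borel_measurable N"
    if "a \<in> borel_measurable N" "b \<in> measurable N ereal_seqs" for a b and N :: "'b measure"
    using measurable_compose[OF measurable_Pair[OF that] Psi] by simp
  have "(\<integral>\<^sup>+\<omega>. (\<Sum>k. Psi (ppr_Ttilde Q P \<omega> k) (del_index k (ppr_Ttilde Q P \<omega>))) \<partial>ppr_space Q)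
      = (\<integral>\<^sup>+s. indicator {0<..} s * \<integral>\<^sup>+\<omega>. Psi (ereal s) (ppr_Ttilde Q P \<omega>) \<partial>ppr_space Q \<partial>lborel)"
    by (rule ppr_mecke_total[OF Q P ac Psi]) (simp add: Psi_def)
  also have "\<dots> \<le> (\<integral>\<^sup>+s. \<integral>\<^sup>+\<omega>. (\<Sum>i. indicator {ppr_Ttilde Q P \<omega> i} (ereal s)) \<partial>ppr_space Q \<partial>lborel)"
  proof (intro nn_integral_mono)
    fix s :: real
    have "(\<integral>\<^sup>+\<omega>. Psi (ereal s) (ppr_Ttilde Q P \<omega>) \<partial>ppr_space Q)
        \<le> (\<integral>\<^sup>+\<omega>. (\<Sum>i. indicator {ppr_Ttilde Q P \<omega> i} (ereal s)) \<partial>ppr_space Q)"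
      unfolding Psi_def by (intro nn_integral_mono suminf_le) (auto simp: indicator_def)
    then show "indicator {0<..} s * (\<integral>\<^sup>+\<omega>. Psi (ereal s) (ppr_Ttilde Q P \<omega>) \<partial>ppr_space Q)
        \<le> (\<integral>\<^sup>+\<omega>. (\<Sum>i. indicator {ppr_Ttilde Q P \<omega> i} (ereal s)) \<partial>ppr_space Q)"
      by (cases "0 < s") auto
  qed
  also have "\<dots> = (\<integral>\<^sup>+\<omega>. (\<Sum>i. \<integral>\<^sup>+s. indicator {ppr_Ttilde Q P \<omega> i} (ereal s) \<partial>lborel) \<partial>ppr_space Q)"
    by (subst nn_integral_swap[OF lborel.sigma_finite_measure_axioms
        prob_space_imp_sigma_finite[OF prob_space_ppr_space[OF Q]]])
      (measurable, auto intro!: nn_integral_cong nn_integral_suminf)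
  also have "\<dots> = 0"
  proof -
    have "(\<integral>\<^sup>+s. indicator {x} (ereal s) \<partial>lborel) \<le> (\<integral>\<^sup>+s. indicator {real_of_ereal x} s \<partial>lborel)" for x
      by (intro nn_integral_mono) (auto simp: indicator_def)
    then show ?thesis by simp
  qed
  finally have "AE \<omega> in ppr_space Q. (\<Sum>k. Psi (ppr_Ttilde Q P \<omega> k) (del_index k (ppr_Ttilde Q P \<omega>))) = 0"
    by (subst (asm) le_zero_eq, subst (asm) nn_integral_0_iff_AE) measurable
  then show ?thesis
    by (rule eventually_mono) (auto simp: Psi_def suminf_eq_zero_iff split: if_splits)
qed

lemma suminf_ppr_select_infinity:
  fixes X :: "nat \<Rightarrow> ereal"
  assumes finite_point: "X i0 < \<infinity>"
    and locally_finite: "\<And>M::nat. finite {k. X k \<le> real M}"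
    and no_ties: "\<And>k i. X k = del_index k X i \<Longrightarrow> X k = \<infinity>"
  shows "(\<Sum>k. ppr_select \<infinity> (X k) (del_index k X)) = 1"
proof -
  obtain M :: nat where M: "X i0 \<le> real M"
  proof (cases "X i0")
    case (real r)
    obtain M :: nat where "r \<le> real M" using real_arch_simple by blast
    then show ?thesis using that real by auto
  qed (use finite_point in auto)
  define S where "S = {k. X k \<le> real M}"
  have S: "finite S" "i0 \<in> S"
    using locally_finite M by (auto simp: S_def)
  then have "Min (X ` S) \<in> X ` S"
    by (intro Min_in) auto
  then obtain k0 where k0: "k0 \<in> S" "X k0 = Min (X ` S)"
    by auto
  have min: "X k0 \<le> X j" for j
  proof (cases "j \<in> S")
    case True
    then show ?thesis using k0(2) Min_le[OF finite_imageI[OF S(1)], of "X j"] by simp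
  next
    case False
    then show ?thesis using k0(1) by (auto simp: S_def)
  qed
  have strict: "X k0 < X j" if "j \<noteq> k0" for j
  proof -
    have "X j = del_index k0 X (if j < k0 then j else j - 1)"
      using that by (auto simp: del_index_def)
    moreover have "X k0 \<noteq> \<infinity>"
      using k0(1) by (auto simp: S_def)
    ultimately have "X k0 \<noteq> X j"
      using no_ties[of k0] by force
    then show ?thesis using min[of j] by simp
  qed
  have "(\<forall>j. j \<noteq> k \<longrightarrow> X k < X j) \<longleftrightarrow> k = k0" for k
  proof
    assume "\<forall>j. j \<noteq> k \<longrightarrow> X k < X j"
    then show "k = k0" using strict[of k] less_asym by blast
  qed (use strict in auto)
  then have "ppr_select \<infinity> (X k) (del_index k X) = (if k = k0 then 1 else 0)" for k
    using all_del_index_iff[of k "\<lambda>x. X k < x" X] by (simp add: ppr_select_def)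
  then have "(\<Sum>k. ppr_select \<infinity> (X k) (del_index k X)) = (\<Sum>k. if k = k0 then 1 else 0)"
    by (rule suminf_cong)
  also have "\<dots> = 1"
    by (subst suminf_finite[of "{k0}"]) auto
  finally show ?thesis .
qed

lemma suminf_ppr_select_finite:
  fixes X :: "nat \<Rightarrow> ereal"
  assumes \<alpha>: "\<alpha> \<noteq> \<infinity>" and finite_point: "X i0 < \<infinity>" and pos: "\<And>k. 0 < X k"
    and finite_head: "finite {k. X k \<le> 1}"
    and finite_tail: "(\<Sum>k. if 1 < X k then neg_powr_weight (real_of_ereal \<alpha>) (X k) else 0) \<noteq> \<infinity>"
  shows "(\<Sum>k. ppr_select \<alpha> (X k) (del_index k X)) = 1"
proof -
  define W where "W k = neg_powr_weight (real_of_ereal \<alpha>) (X k)" for k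
  define S where "S = (\<Sum>k. W k)"
  have select_eq: "ppr_select \<alpha> (X k) (del_index k X) = W k / S" for k
  proof -
    have "S = W k + (\<Sum>i. del_index k W i)"
      unfolding S_def by (rule suminf_del_index)
    moreover have "del_index k W i = neg_powr_weight (real_of_ereal \<alpha>) (del_index k X i)" for i
      by (simp add: del_index_def W_def)
    ultimately show ?thesis
      using \<alpha> by (simp add: ppr_select_def W_def)
  qed
  have "0 < W i0"
  proof (cases "X i0")
    case (real r)
    with pos[of i0] have "0 < r" by simp
    then show ?thesis using real by (simp add: W_def neg_powr_weight_def)
  qed (use finite_point pos[of i0] in auto)
  moreover have "W i0 \<le> S"
    unfolding S_def using suminf_del_index[of W i0] by (metis le_iff_add)
  ultimately have "S \<noteq> 0" by auto
  have "S < \<infinity>"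
  proof -
    have "S = (\<Sum>k. (if 1 < X k then W k else 0) + (if 1 < X k then 0 else W k))"
      unfolding S_def by (intro suminf_cong) auto
    also have "\<dots> = (\<Sum>k. if 1 < X k then W k else 0) + (\<Sum>k. if 1 < X k then 0 else W k)"
      by (rule suminf_add[symmetric]) auto
    finally have split: "S = (\<Sum>k. if 1 < X k then W k else 0) + (\<Sum>k. if 1 < X k then 0 else W k)" .
    have "(\<Sum>k. if 1 < X k then 0 else W k) = (\<Sum>k\<in>{k. X k \<le> 1}. if 1 < X k then 0 else W k)"
      by (rule suminf_finite[OF finite_head]) auto
    also have "\<dots> < \<infinity>"
      using finite_head by (simp add: W_def neg_powr_weight_less_top)
    finally have "(\<Sum>k. if 1 < X k then 0 else W k) \<noteq> \<infinity>" by simp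
    moreover have "(\<Sum>k. if 1 < X k then W k else 0) \<noteq> \<infinity>"
      using finite_tail unfolding W_def by simp
    ultimately show ?thesis using split by (simp add: ennreal_add_eq_top less_top)
  qed
  have "(\<Sum>k. ppr_select \<alpha> (X k) (del_index k X)) = (\<Sum>k. W k * inverse S)"
    by (simp add: select_eq divide_ennreal_def)
  also have "\<dots> = S * inverse S"
    by (simp add: S_def)
  also have "\<dots> = 1"
    using \<open>S \<noteq> 0\<close> \<open>S < \<infinity>\<close> by (metis divide_ennreal_def ennreal_divide_self infinity_ennreal_def)
  finally show ?thesis .
qed

lemma AE_suminf_ppr_select_eq_1:
  assumes Q: "prob_space Q" and P: "prob_space P" "sets P = sets Q" and ac: "absolutely_continuous Q P"
    and \<alpha>: "1 < \<alpha>"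
  shows "AE \<omega> in ppr_space Q. (\<Sum>k. ppr_select \<alpha> (ppr_Ttilde Q P \<omega> k) (del_index k (ppr_Ttilde Q P \<omega>))) = 1"
proof -
  have tail: "AE \<omega> in ppr_space Q. \<alpha> \<noteq> \<infinity> \<longrightarrow>
      (\<Sum>k. if 1 < ppr_Ttilde Q P \<omega> k then neg_powr_weight (real_of_ereal \<alpha>) (ppr_Ttilde Q P \<omega> k) else 0) \<noteq> \<infinity>"
  proof (cases "\<alpha> = \<infinity>")
    case False
    then have "1 < real_of_ereal \<alpha>" using \<alpha> by (cases \<alpha>) auto
    from AE_ppr_Ttilde_tail_finite[OF Q P ac this] show ?thesis by (rule eventually_mono) simp
  qed simp
  show ?thesis
    using AE_ppr_dens_nonzero[OF Q P ac] AE_ppr_Ttilde_pos[OF Q P ac]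
      AE_finite_ppr_Ttilde_le[OF Q P ac] AE_ppr_Ttilde_no_ties[OF Q P ac] tail
  proof eventually_elim
    case (elim \<omega>)
    let ?X = "ppr_Ttilde Q P \<omega>"
    obtain i0 where "?X i0 < \<infinity>"
      using elim(1) by (auto simp: ppr_Ttilde_def)
    show ?case
    proof (cases "\<alpha> = \<infinity>")
      case True
      then show ?thesis
        using suminf_ppr_select_infinity[of ?X i0] \<open>?X i0 < \<infinity>\<close> elim(3,4) by simp
    next
      case False
      have "finite {k. ?X k \<le> 1}"
        using elim(3)[rule_format, of 1] by (simp add: one_ereal_def)
      then show ?thesis
        using suminf_ppr_select_finite[OF False, of ?X i0] \<open>?X i0 < \<infinity>\<close> elim(2,5) False by simp
    qed
  qed
qed

theorem proposition1:
  fixes \<alpha> :: ereal and Q :: "'z measure" and MX :: "'x measure"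
    and PZX :: "'x \<Rightarrow> 'z measure"
  assumes alpha: "1 < \<alpha>"
    and Q: "prob_space Q"
    and kernel: "PZX \<in> MX \<rightarrow>\<^sub>M prob_algebra Q"
    and ac: "\<And>x. x \<in> space MX \<Longrightarrow> absolutely_continuous Q (PZX x)"
    and x: "x \<in> space MX"
    and A: "A \<in> sets Q"
  shows "ppr_output_prob \<alpha> Q (PZX x) A = emeasure (PZX x) A"
proof -
  define P where "P = PZX x"
  have P: "prob_space P" "sets P = sets Q"
    using measurable_space[OF kernel x] by (auto simp: P_def space_prob_algebra)
  have acP: "absolutely_continuous Q P"
    unfolding P_def by (rule ac[OF x])
  let ?select = "\<lambda>\<omega> k. ppr_select \<alpha> (ppr_Ttilde Q P \<omega> k) (del_index k (ppr_Ttilde Q P \<omega>))"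
  define C where "C = (\<integral>\<^sup>+s. indicator {0<..} s * \<integral>\<^sup>+\<omega>. ppr_select \<alpha> (ereal s) (ppr_Ttilde Q P \<omega>) \<partial>ppr_space Q \<partial>lborel)"
  have "C = (\<integral>\<^sup>+\<omega>. (\<Sum>k. ?select \<omega> k) \<partial>ppr_space Q)"
    unfolding C_def by (rule ppr_mecke_total[OF Q P acP, symmetric]) simp_all
  also have "\<dots> = (\<integral>\<^sup>+\<omega>. 1 \<partial>ppr_space Q)"
    by (rule nn_integral_cong_AE[OF AE_suminf_ppr_select_eq_1[OF Q P acP alpha]])
  finally have "C = 1"
    by (simp add: prob_space.emeasure_space_1[OF prob_space_ppr_space[OF Q]])
  have "ppr_output_prob \<alpha> Q P A = (\<Sum>k. \<integral>\<^sup>+\<omega>. indicator A (fst \<omega> k) * ?select \<omega> k \<partial>ppr_space Q)"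
    unfolding ppr_output_prob_def ppr_index_prob_eq_select
    by (subst nn_integral_suminf) (use A in \<open>measurable, simp add: mult.commute\<close>)
  also have "\<dots> = emeasure P A * C"
    unfolding C_def by (rule ppr_mecke[OF Q P acP _ _ A]) simp_all
  finally show ?thesis
    using \<open>C = 1\<close> by (simp add: P_def)
qed

end
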